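(* Let $s,t,\ell,m$ be integers with $1\le t\le \ell \le m$ and $1 \le s \le t$. Then $\mathfrak{w}_{\ell}^{(s)}(t;\ell,m)=0$ if $s \ne t$, while $$\mathfrak{w}_{\ell}^{(t)}(t;\ell,m) = \mathfrak{w}_{\ell}(t;\ell,m) = \frac{q-1}{q}\left(\mu_t(\ell,m) - (-1)^t q^{\binom{t}{2}}{\ell\brack t}_q \right).$$
   Context: $q$ is a prime power. $\mu_t(\ell,m)$ is the number of $\ell\times m$ matrices over $\mathbb{F}_q$ of rank exactly $t$. For an $\ell\times m$ matrix $M=(m_{ij})$ and $1\le r\le\ell$, $\tau_r(M)=m_{11}+\cdots+m_{rr}$ and $\underline{M}_r$ is the matrix of its first $r$ rows. $\mathfrak w_r(t;\ell,m)$ is the number of $\ell\times m$ matrices $M$ over $\mathbb{F}_q$ with $\mathrm{rk}(M)=t$ and $\tau_r(M)\ne0$, and $\mathfrak w^{(s)}_r(t;\ell,m)$ is the number of those that additionally satisfy $\mathrm{rk}(\underline{M}_r)=s$. ${n\brack k}_q$ is the Gaussian binomial coefficient. *)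

theory Defs
  imports "Jordan_Normal_Form.DL_Rank_Submatrix"
begin

definition mrank :: "'a::field mat \<Rightarrow> nat" where
  "mrank A = vec_space.rank (dim_row A) A"

(* tau_r(M) = m_11 + ... + m_rr  (0-based indices in Isabelle) *)
definition tau :: "nat \<Rightarrow> 'a::field mat \<Rightarrow> 'a" where
  "tau r M = (\<Sum>i<r. M $$ (i, i))"

definition first_rows :: "nat \<Rightarrow> 'a::field mat \<Rightarrow> 'a mat" where
  "first_rows r M = mat r (dim_col M) (\<lambda>(i, j). M $$ (i, j))"

definition mu :: "'a::{finite,field} itself \<Rightarrow> nat \<Rightarrow> nat \<Rightarrow> nat \<Rightarrow> nat" where
  "mu _ t l m = card {M :: 'a mat. M \<in> carrier_mat l m \<and> mrank M = t}"

definition w :: "'a::{finite,field} itself \<Rightarrow> nat \<Rightarrow> nat \<Rightarrow> nat \<Rightarrow> nat \<Rightarrow> nat" where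
  "w _ r t l m = card {M :: 'a mat. M \<in> carrier_mat l m \<and> mrank M = t \<and> tau r M \<noteq> 0}"

definition ws :: "'a::{finite,field} itself \<Rightarrow> nat \<Rightarrow> nat \<Rightarrow> nat \<Rightarrow> nat \<Rightarrow> nat \<Rightarrow> nat" where
  "ws _ s r t l m = card {M :: 'a mat. M \<in> carrier_mat l m \<and> mrank M = t \<and> tau r M \<noteq> 0
                                  \<and> mrank (first_rows r M) = s}"

definition qbinom :: "real \<Rightarrow> nat \<Rightarrow> nat \<Rightarrow> real" where
  "qbinom q n k = (if k \<le> n then (\<Prod>i<k. (q ^ (n - i) - 1) / (q ^ (i + 1) - 1)) else 0)"

end

theory Submission
  imports Defs "HOL-Library.Cardinality"
begin

(* Since the first l rows of an l x m matrix are the whole matrix, only w_l(t;l,m) needs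
   computing. Reversing the first l columns identifies matrices with lists of m column vectors,
   tau_l with the antitrace sum_{j<l} c_j(l-1-j) and the rank with the dimension of the span.
   Scaling all columns by a <> 0 multiplies the antitrace by a, so if N_a counts rank-t lists of
   antitrace a, then w = (q-1) N_1 and mu = N_0 + (q-1) N_1, and it remains to compute N_0 - N_1.
   For lists of vectors supported on the first k coordinates this signed count D_k satisfies
   D_{k+1}(m+1,t) = q^t D_k(m,t) - q^(t-1) D_k(m,t-1): the first column c contributes c_k to the
   antitrace, and summing the signed weight over c kills every list whose other columns do not
   all vanish at coordinate k. This is the q-Pascal recursion solved by
   (-1)^t q^(t choose 2) [k t]_q. *)

lemma finite_carrier_vec: "finite (carrier_vec n :: 'a::finite vec set)"
proof -
  have "carrier_vec n \<subseteq> vec_of_list ` {xs :: 'a list. set xs \<subseteq> UNIV \<and> length xs = n}"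
  proof
    fix v :: "'a vec" assume "v \<in> carrier_vec n"
    then show "v \<in> vec_of_list ` {xs. set xs \<subseteq> UNIV \<and> length xs = n}"
      by (intro image_eqI[of _ _ "list_of_vec v"]) (auto simp: vec_list)
  qed
  moreover have "finite {xs :: 'a list. set xs \<subseteq> UNIV \<and> length xs = n}"
    by (rule finite_lists_length_eq) simp
  ultimately show ?thesis by (meson finite_imageI finite_subset)
qed

lemma card_filter_bij_betw:
  assumes "bij_betw f A B"
  shows "card {x\<in>A. P (f x)} = card {y\<in>B. P y}"
proof -
  have "bij_betw f {x\<in>A. P (f x)} {y\<in>B. P y}"
    using assms unfolding bij_betw_def inj_on_def by auto
  then show ?thesis by (rule bij_betw_same_card)
qed

lemma card_eq_sum_card_fibers:
  assumes "finite A" and "finite B"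
  shows "card {x\<in>A. P x \<and> f x \<in> B} = (\<Sum>b\<in>B. card {x\<in>A. P x \<and> f x = b})"
proof -
  have "{x\<in>A. P x \<and> f x \<in> B} = (\<Union>b\<in>B. {x\<in>A. P x \<and> f x = b})" by auto
  moreover have "card (\<Union>b\<in>B. {x\<in>A. P x \<and> f x = b}) = (\<Sum>b\<in>B. card {x\<in>A. P x \<and> f x = b})"
    by (rule card_UN_disjoint) (use assms in auto)
  ultimately show ?thesis by simp
qed

definition signed_ind :: "'a::zero_neq_one \<Rightarrow> real" where
  "signed_ind x = of_bool (x = 0) - of_bool (x = 1)"

lemma sum_signed_ind:
  assumes "finite S"
  shows "(\<Sum>x\<in>S. signed_ind (g x)) = real (card {x\<in>S. g x = 0}) - real (card {x\<in>S. g x = 1})"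
proof -
  have "(\<Sum>x\<in>S. signed_ind (g x)) = (\<Sum>x\<in>S. of_bool (g x = 0)) - (\<Sum>x\<in>S. (of_bool (g x = 1) :: real))"
    unfolding signed_ind_def by (simp add: sum_subtractf)
  also have "\<dots> = real (card (S \<inter> {x. g x = 0})) - real (card (S \<inter> {x. g x = 1}))"
    using assms by simp
  also have "S \<inter> {x. g x = 0} = {x\<in>S. g x = 0}" by auto
  also have "S \<inter> {x. g x = 1} = {x\<in>S. g x = 1}" by auto
  finally show ?thesis .
qed

definition qbinom_num :: "real \<Rightarrow> nat \<Rightarrow> nat \<Rightarrow> real" where
  "qbinom_num q n k = (\<Prod>i<k. q ^ (n - i) - 1)"

definition qbinom_den :: "real \<Rightarrow> nat \<Rightarrow> real" where
  "qbinom_den q k = (\<Prod>i<k. q ^ (i + 1) - 1)"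

lemma qbinom_num_eq_0: "n < k \<Longrightarrow> qbinom_num q n k = 0"
  unfolding qbinom_num_def by (rule prod_zero) (auto intro!: bexI[of _ n])

lemma qbinom_eq_num_div_den: "qbinom q n k = qbinom_num q n k / qbinom_den q k"
  unfolding qbinom_def qbinom_num_def qbinom_den_def
  using qbinom_num_eq_0[of n k q] by (simp add: prod_dividef qbinom_num_def)

lemma qbinom_den_neq_0:
  assumes "q > 1"
  shows "qbinom_den q k \<noteq> 0"
proof -
  have "q ^ (i + 1) \<noteq> 1" for i using one_less_power[OF assms, of "i + 1"] by simp
  then show ?thesis unfolding qbinom_den_def by (simp add: prod_zero_iff)
qed

lemma qbinom_0_right [simp]: "qbinom q n 0 = 1"
  unfolding qbinom_def by simp

lemma qbinom_0_Suc [simp]: "qbinom q 0 (Suc k) = 0"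
  unfolding qbinom_def by simp

lemma qbinom_Suc_Suc:
  assumes q: "q > 1"
  shows "qbinom q (Suc n) (Suc k) = qbinom q n k + q ^ Suc k * qbinom q n (Suc k)"
proof -
  let ?P = "qbinom_num q n k" and ?Q = "qbinom_den q k"
  let ?x = "q ^ (n - k) - 1" and ?y = "q ^ Suc k - 1"
  have num_Suc_Suc: "qbinom_num q (Suc n) (Suc k) = (q ^ Suc n - 1) * ?P"
    unfolding qbinom_num_def by (subst prod.lessThan_Suc_shift) simp
  have num_Suc: "qbinom_num q n (Suc k) = ?P * ?x" and den_Suc: "qbinom_den q (Suc k) = ?Q * ?y"
    unfolding qbinom_num_def qbinom_den_def by simp_all
  have "?y \<noteq> 0" using one_less_power[OF q, of "Suc k"] by simp
  then have "?P / ?Q + q ^ Suc k * (?P * ?x / (?Q * ?y)) = (?P * ?y + q ^ Suc k * (?P * ?x)) / (?Q * ?y)"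
    using qbinom_den_neq_0[OF q, of k] by (simp add: field_simps)
  also have "?P * ?y + q ^ Suc k * (?P * ?x) = (q ^ Suc n - 1) * ?P"
  proof (cases "k \<le> n")
    case True
    then have "q ^ Suc k * q ^ (n - k) = q ^ Suc n" by (simp flip: power_add)
    then show ?thesis by (simp add: algebra_simps) (metis mult.assoc mult.commute)
  next
    case False
    then show ?thesis using qbinom_num_eq_0[of n k q] by simp
  qed
  finally show ?thesis
    unfolding qbinom_eq_num_div_den num_Suc_Suc num_Suc den_Suc by simp
qed

context vec_space
begin

lemma span_Cons:
  assumes "c \<in> carrier_vec n" and "set cs \<subseteq> carrier_vec n"
  shows "span (set (c # cs)) = {a \<cdot>\<^sub>v c + v | a v. v \<in> span (set cs)}"
proof -
  have "span_list (c # cs) = {a \<cdot>\<^sub>v c + v | a v. v \<in> span_list cs}"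
  proof (intro equalityI subsetI)
    fix x assume "x \<in> span_list (c # cs)"
    then show "x \<in> {a \<cdot>\<^sub>v c + v | a v. v \<in> span_list cs}"
      by (auto simp: span_list_def)
  next
    fix x assume "x \<in> {a \<cdot>\<^sub>v c + v | a v. v \<in> span_list cs}"
    then obtain a g where x: "x = a \<cdot>\<^sub>v c + lincomb_list g cs" by (auto simp: span_list_def)
    define f where "f = (\<lambda>i. if i = 0 then a else g (i - 1))"
    have "f \<circ> Suc = g" by (auto simp: f_def)
    then have "x = lincomb_list f (c # cs)" using x by (simp add: f_def)
    then show "x \<in> span_list (c # cs)" by (auto simp: span_list_def)
  qed
  then show ?thesis using span_list_as_span assms by simp
qed

lemma span_Cons_in_span:
  assumes c: "c \<in> carrier_vec n" and cs: "set cs \<subseteq> carrier_vec n" and "c \<in> span (set cs)"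
  shows "span (set (c # cs)) = span (set cs)"
proof -
  have "a \<cdot>\<^sub>v c + v \<in> span (set cs)" if "v \<in> span (set cs)" for a v
    using span_add1[OF cs smult_in_span[OF cs \<open>c \<in> span (set cs)\<close>] that] by simp
  moreover have "v = 0 \<cdot>\<^sub>v c + v" if "v \<in> span (set cs)" for v
    using span_closed[OF cs that] c by auto
  ultimately show ?thesis unfolding span_Cons[OF c cs] by blast
qed

lemma span_coord_eq_0:
  assumes "set cs \<subseteq> carrier_vec n" and "i < n" and "\<forall>v\<in>set cs. v $ i = 0"
  shows "\<forall>x\<in>span (set cs). x $ i = 0"
  using assms
proof (induction cs)
  case Nil
  then show ?case using span_empty by simp
next
  case (Cons c cs)
  then have c: "c \<in> carrier_vec n" and cs: "set cs \<subseteq> carrier_vec n" by auto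
  show ?case
  proof
    fix x assume "x \<in> span (set (c # cs))"
    then obtain a v where x: "x = a \<cdot>\<^sub>v c + v" and v: "v \<in> span (set cs)"
      unfolding span_Cons[OF c cs] by blast
    have "v \<in> carrier_vec n" using span_closed[OF cs v] .
    moreover have "v $ i = 0" using Cons.IH cs Cons.prems v by auto
    ultimately show "x $ i = 0" using x c Cons.prems by simp
  qed
qed

lemma span_map_smult:
  assumes "set cs \<subseteq> carrier_vec n" and a: "a \<noteq> 0"
  shows "span (set (map (\<lambda>v. a \<cdot>\<^sub>v v) cs)) = span (set cs)"
  using assms(1)
proof (induction cs)
  case Nil
  then show ?case by simp
next
  case (Cons c cs)
  then have c: "c \<in> carrier_vec n" and cs: "set cs \<subseteq> carrier_vec n" by auto
  have ac: "a \<cdot>\<^sub>v c \<in> carrier_vec n" and acs: "set (map (\<lambda>v. a \<cdot>\<^sub>v v) cs) \<subseteq> carrier_vec n"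
    using c cs by auto
  have "span (set (map (\<lambda>v. a \<cdot>\<^sub>v v) (c # cs)))
      = {b \<cdot>\<^sub>v (a \<cdot>\<^sub>v c) + v | b v. v \<in> span (set cs)}"
    using span_Cons[OF ac acs] Cons.IH[OF cs] by simp
  also have "\<dots> = {b \<cdot>\<^sub>v c + v | b v. v \<in> span (set cs)}"
  proof (intro equalityI subsetI)
    fix x assume "x \<in> {b \<cdot>\<^sub>v (a \<cdot>\<^sub>v c) + v | b v. v \<in> span (set cs)}"
    then obtain b v where "x = b \<cdot>\<^sub>v (a \<cdot>\<^sub>v c) + v" "v \<in> span (set cs)" by blast
    then show "x \<in> {b \<cdot>\<^sub>v c + v | b v. v \<in> span (set cs)}"
      by (intro CollectI exI[of _ "b * a"] exI[of _ v]) (simp add: smult_smult_assoc)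
  next
    fix x assume "x \<in> {b \<cdot>\<^sub>v c + v | b v. v \<in> span (set cs)}"
    then obtain b v where "x = b \<cdot>\<^sub>v c + v" "v \<in> span (set cs)" by blast
    moreover have "b \<cdot>\<^sub>v c = (b / a) \<cdot>\<^sub>v (a \<cdot>\<^sub>v c)" using a by (simp add: smult_smult_assoc)
    ultimately show "x \<in> {b \<cdot>\<^sub>v (a \<cdot>\<^sub>v c) + v | b v. v \<in> span (set cs)}"
      by (intro CollectI exI[of _ "b / a"] exI[of _ v]) simp
  qed
  also have "\<dots> = span (set (c # cs))" using span_Cons[OF c cs] by simp
  finally show ?case .
qed

lemma lin_indpt_empty: "lin_indpt {}"
  using lindep_span[of "{}"] by simp

lemma lin_indpt_insert_not_in_span:
  assumes "U \<subseteq> carrier_vec n" and "lin_indpt U" and "c \<in> carrier_vec n" and "c \<notin> span U"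
  shows "lin_indpt (insert c U)"
  using lin_dep_iff_in_span[OF assms(1-3)] assms(4) in_own_span[OF assms(1)] by auto

lemma exists_lin_indpt_spanning_subset:
  assumes "set cs \<subseteq> carrier_vec n"
  shows "\<exists>U. U \<subseteq> set cs \<and> lin_indpt U \<and> span U = span (set cs)"
  using assms
proof (induction cs)
  case Nil
  then show ?case using lin_indpt_empty by auto
next
  case (Cons c cs)
  then have c: "c \<in> carrier_vec n" and cs: "set cs \<subseteq> carrier_vec n" by auto
  from Cons.IH[OF cs] obtain U where U: "U \<subseteq> set cs" "lin_indpt U" "span U = span (set cs)"
    by blast
  show ?case
  proof (cases "c \<in> span (set cs)")
    case True
    then show ?thesis using U span_Cons_in_span[OF c cs] by auto
  next
    case False
    obtain us where us: "set us = U" using U(1) finite_list[of U] finite_subset by blast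
    then have "span (insert c U) = span (set (c # cs))"
      using span_Cons[OF c cs] span_Cons[OF c, of us] U cs by auto
    then show ?thesis
      using lin_indpt_insert_not_in_span[of U c] False U cs c by (intro exI[of _ "insert c U"]) auto
  qed
qed

lemma dim_span_vs_eq_card:
  assumes "U \<subseteq> carrier_vec n" "finite U" "lin_indpt U" "span U = span S"
  shows "vectorspace.dim class_ring (span_vs S) = card U"
proof -
  have "maximal U (\<lambda>T. T \<subseteq> U \<and> lin_indpt T)" using assms(3) unfolding maximal_def by auto
  from dim_span[OF assms(1,2) this] show ?thesis using assms(4) by simp
qed

definition rank_list :: "'a vec list \<Rightarrow> nat" where
  "rank_list cs = vectorspace.dim class_ring (span_vs (set cs))"

lemma rank_list_Nil: "rank_list [] = 0"
  unfolding rank_list_def using dim_span_vs_eq_card[of "{}" "{}"] lin_indpt_empty by simp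

lemma rank_list_Cons:
  assumes c: "c \<in> carrier_vec n" and cs: "set cs \<subseteq> carrier_vec n"
  shows "rank_list (c # cs) = rank_list cs + (if c \<in> span (set cs) then 0 else 1)"
proof (cases "c \<in> span (set cs)")
  case True
  then show ?thesis unfolding rank_list_def using span_Cons_in_span[OF c cs] by simp
next
  case False
  obtain U where U: "U \<subseteq> set cs" "lin_indpt U" "span U = span (set cs)"
    using exists_lin_indpt_spanning_subset[OF cs] by blast
  have Uc: "U \<subseteq> carrier_vec n" and fU: "finite U" using U(1) cs finite_subset by auto
  have cU: "c \<notin> U" using False U in_own_span[OF Uc] by auto
  obtain us where us: "set us = U" using fU finite_list by blast
  have "span (insert c U) = span (set (c # cs))"
    using span_Cons[OF c cs] span_Cons[OF c, of us] us U(3) Uc by auto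
  then have "rank_list (c # cs) = card (insert c U)"
    unfolding rank_list_def
    using lin_indpt_insert_not_in_span[OF Uc U(2) c] False U(3) Uc c fU
    by (intro dim_span_vs_eq_card) auto
  moreover have "rank_list cs = card U"
    unfolding rank_list_def by (rule dim_span_vs_eq_card) (use Uc fU U in auto)
  ultimately show ?thesis using False cU fU by simp
qed

lemma rank_list_map_smult:
  assumes "set cs \<subseteq> carrier_vec n" and "a \<noteq> 0"
  shows "rank_list (map (\<lambda>v. a \<cdot>\<^sub>v v) cs) = rank_list cs"
  unfolding rank_list_def using span_map_smult[OF assms] by simp

lemma rank_list_replicate_zero: "rank_list (replicate m (0\<^sub>v n)) = 0"
proof (induction m)
  case 0
  then show ?case using rank_list_Nil by simp
next
  case (Suc m)
  have "0\<^sub>v n \<in> span (set (replicate m (0\<^sub>v n)))"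
    by (rule vectorspace.span_zero[OF vectorspace_axioms, simplified])
  then show ?case using rank_list_Cons[of "0\<^sub>v n" "replicate m (0\<^sub>v n)"] Suc
    by (simp add: set_replicate_conv_if)
qed

lemma inj_on_smult_add_not_in_span:
  assumes c: "c \<in> carrier_vec n" and cs: "set cs \<subseteq> carrier_vec n" and "c \<notin> span (set cs)"
  shows "inj_on (\<lambda>(a, v). a \<cdot>\<^sub>v c + v) (UNIV \<times> span (set cs))"
proof (rule inj_onI, clarify)
  fix a v b u
  assume v: "v \<in> span (set cs)" and u: "u \<in> span (set cs)" and eq: "a \<cdot>\<^sub>v c + v = b \<cdot>\<^sub>v c + u"
  have vc: "v \<in> carrier_vec n" and uc: "u \<in> carrier_vec n" using v u span_closed[OF cs] by auto
  have diff: "(a - b) \<cdot>\<^sub>v c = u + (-1) \<cdot>\<^sub>v v"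
  proof (rule eq_vecI)
    fix i assume "i < dim_vec (u + (-1) \<cdot>\<^sub>v v)"
    then have "i < n" using vc by simp
    moreover have "(a \<cdot>\<^sub>v c + v) $ i = (b \<cdot>\<^sub>v c + u) $ i" using eq by simp
    ultimately show "((a - b) \<cdot>\<^sub>v c) $ i = (u + (-1) \<cdot>\<^sub>v v) $ i"
      using vc uc c by (simp add: algebra_simps)
  qed (use vc c in simp)
  have "a = b"
  proof (rule ccontr)
    assume "a \<noteq> b"
    then have "c = inverse (a - b) \<cdot>\<^sub>v ((a - b) \<cdot>\<^sub>v c)"
      using c by (simp add: smult_smult_assoc)
    then have "c = inverse (a - b) \<cdot>\<^sub>v (u + (-1) \<cdot>\<^sub>v v)"
      unfolding diff .
    moreover have "u + (-1) \<cdot>\<^sub>v v \<in> span (set cs)"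
      using span_add1[OF cs u smult_in_span[OF cs v]] .
    ultimately show False using \<open>c \<notin> span (set cs)\<close> smult_in_span[OF cs] by metis
  qed
  moreover have "v = u"
  proof (rule eq_vecI)
    fix i assume "i < dim_vec u"
    then have "i < n" using uc by simp
    moreover have "(a \<cdot>\<^sub>v c + v) $ i = (b \<cdot>\<^sub>v c + u) $ i" using eq by simp
    ultimately show "v $ i = u $ i" using vc uc c \<open>a = b\<close> by simp
  qed (use vc uc in simp)
  ultimately show "a = b \<and> v = u" ..
qed

lemma sum_signed_ind_coord_eq_0:
  fixes S :: "'a vec set"
  assumes S: "finite S" "S \<subseteq> carrier_vec n" and u: "u \<in> carrier_vec n" "u $ i = 1" and "i < n"
    and closed: "\<And>c y. c \<in> S \<Longrightarrow> c + y \<cdot>\<^sub>v u \<in> S"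
  shows "(\<Sum>c\<in>S. signed_ind (c $ i + a)) = 0"
proof -
  let ?A = "{c\<in>S. c $ i + a = 0}" and ?B = "{c\<in>S. c $ i + a = 1}"
  have shift: "(c + u) $ i = c $ i + 1" "(c + (-1) \<cdot>\<^sub>v u) $ i = c $ i - 1"
    "c + u + (-1) \<cdot>\<^sub>v u = c" "c + (-1) \<cdot>\<^sub>v u + u = c" "c + u \<in> S" "c + (-1) \<cdot>\<^sub>v u \<in> S"
    if "c \<in> S" for c
    using that S u \<open>i < n\<close> closed[of c 1] closed[of c "-1"] by (auto intro!: eq_vecI)
  have "bij_betw (\<lambda>c. c + u) ?A ?B"
  proof (rule bij_betw_byWitness[where f' = "\<lambda>c. c + (-1) \<cdot>\<^sub>v u"])
    show "\<forall>c\<in>?A. c + u + (-1) \<cdot>\<^sub>v u = c" "\<forall>c\<in>?B. c + (-1) \<cdot>\<^sub>v u + u = c"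
      using shift by auto
    show "(\<lambda>c. c + u) ` ?A \<subseteq> ?B"
    proof
      fix x assume "x \<in> (\<lambda>c. c + u) ` ?A"
      then obtain c where c: "c \<in> S" "c $ i + a = 0" "x = c + u" by blast
      have "x $ i + a = (c $ i + a) + 1" using shift(1)[OF c(1)] c(3) by (simp add: algebra_simps)
      then show "x \<in> ?B" using c shift(5) by simp
    qed
    show "(\<lambda>c. c + (-1) \<cdot>\<^sub>v u) ` ?B \<subseteq> ?A"
    proof
      fix x assume "x \<in> (\<lambda>c. c + (-1) \<cdot>\<^sub>v u) ` ?B"
      then obtain c where c: "c \<in> S" "c $ i + a = 1" "x = c + (-1) \<cdot>\<^sub>v u" by blast
      have "x $ i + a = (c $ i + a) - 1" using shift(2)[OF c(1)] c(3) by (simp add: algebra_simps)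
      then show "x \<in> ?A" using c shift(6) by simp
    qed
  qed
  then have "card ?A = card ?B" by (rule bij_betw_same_card)
  then show ?thesis using sum_signed_ind[OF S(1), of "\<lambda>c. c $ i + a"] by simp
qed

end

locale finite_vec_space = vec_space f_ty n for f_ty :: "'a::{finite,field} itself" and n
begin

lemma finite_span: "set cs \<subseteq> carrier_vec n \<Longrightarrow> finite (span (set cs))"
  using finite_subset[OF _ finite_carrier_vec] span_closed by blast

lemma card_span_Cons_not_in_span:
  assumes c: "c \<in> carrier_vec n" and cs: "set cs \<subseteq> carrier_vec n" and "c \<notin> span (set cs)"
  shows "card (span (set (c # cs))) = CARD('a) * card (span (set cs))"
proof -
  have "span (set (c # cs)) = (\<lambda>(a, v). a \<cdot>\<^sub>v c + v) ` (UNIV \<times> span (set cs))"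
    unfolding span_Cons[OF c cs] by auto
  then show ?thesis
    using inj_on_smult_add_not_in_span[OF assms] finite_span[OF cs]
    by (simp add: card_image card_cartesian_product)
qed

lemma card_span: "set cs \<subseteq> carrier_vec n \<Longrightarrow> card (span (set cs)) = CARD('a) ^ rank_list cs"
proof (induction cs)
  case Nil
  then show ?case using span_empty rank_list_Nil by simp
next
  case (Cons c cs)
  then have c: "c \<in> carrier_vec n" and cs: "set cs \<subseteq> carrier_vec n" by auto
  show ?case
  proof (cases "c \<in> span (set cs)")
    case True
    then show ?thesis using span_Cons_in_span[OF c cs] rank_list_Cons[OF c cs] Cons.IH[OF cs] by simp
  next
    case False
    then show ?thesis
      using card_span_Cons_not_in_span[OF c cs] rank_list_Cons[OF c cs] Cons.IH[OF cs] by simp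
  qed
qed

definition coord_subspace :: "nat \<Rightarrow> 'a vec set" where
  "coord_subspace k = {v \<in> carrier_vec n. \<forall>i. k \<le> i \<longrightarrow> i < n \<longrightarrow> v $ i = 0}"

definition col_lists :: "nat \<Rightarrow> nat \<Rightarrow> 'a vec list set" where
  "col_lists k m = {cs. length cs = m \<and> set cs \<subseteq> coord_subspace k}"

definition antitrace :: "nat \<Rightarrow> 'a vec list \<Rightarrow> 'a" where
  "antitrace k cs = (\<Sum>j<k. (cs ! j) $ (k - 1 - j))"

definition signed_count :: "nat \<Rightarrow> nat \<Rightarrow> nat \<Rightarrow> real" where
  "signed_count k m t =
     (\<Sum>cs\<in>col_lists k m. if rank_list cs = t then signed_ind (antitrace k cs) else 0)"

lemma coord_subspace_carrier: "coord_subspace k \<subseteq> carrier_vec n"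
  unfolding coord_subspace_def by auto

lemma finite_coord_subspace: "finite (coord_subspace k)"
  using finite_subset[OF coord_subspace_carrier finite_carrier_vec] .

lemma col_lists_carrier: "cs \<in> col_lists k m \<Longrightarrow> set cs \<subseteq> carrier_vec n"
  unfolding col_lists_def using coord_subspace_carrier by auto

lemma finite_col_lists: "finite (col_lists k m)"
proof -
  have "finite {cs. set cs \<subseteq> coord_subspace k \<and> length cs = m}"
    by (rule finite_lists_length_eq[OF finite_coord_subspace])
  then show ?thesis unfolding col_lists_def by (simp add: conj_commute)
qed

lemma coord_subspace_0: "coord_subspace 0 = {0\<^sub>v n}"
  unfolding coord_subspace_def by (auto intro!: eq_vecI)

lemma signed_count_0: "signed_count 0 m t = of_bool (t = 0)"
proof -
  have "col_lists 0 m = {replicate m (0\<^sub>v n)}"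
    unfolding col_lists_def coord_subspace_0 by (auto intro!: replicate_length_same[symmetric])
  then show ?thesis
    unfolding signed_count_def using rank_list_replicate_zero
    by (simp add: antitrace_def signed_ind_def)
qed

lemma antitrace_Cons: "antitrace (Suc k) (c # cs) = c $ k + antitrace k cs"
  unfolding antitrace_def by (subst sum.lessThan_Suc_shift) simp

lemma signed_count_Suc:
  "signed_count k (Suc m) t =
     (\<Sum>cs\<in>col_lists k m. \<Sum>c\<in>coord_subspace k.
        if rank_list (c # cs) = t then signed_ind (antitrace k (c # cs)) else 0)"
proof -
  have "col_lists k (Suc m) = (\<lambda>(c, cs). c # cs) ` (coord_subspace k \<times> col_lists k m)"
    unfolding col_lists_def by (auto simp: length_Suc_conv)
  moreover have "inj_on (\<lambda>(c, cs). c # cs) (coord_subspace k \<times> col_lists k m)"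
    by (auto simp: inj_on_def)
  ultimately have "signed_count k (Suc m) t = (\<Sum>(c, cs)\<in>coord_subspace k \<times> col_lists k m.
      if rank_list (c # cs) = t then signed_ind (antitrace k (c # cs)) else 0)"
    unfolding signed_count_def by (simp add: sum.reindex case_prod_unfold)
  then show ?thesis by (simp add: sum.cartesian_product[symmetric] sum.swap[of _ "coord_subspace k"])
qed

lemma span_subset_coord_subspace:
  assumes "set cs \<subseteq> coord_subspace k"
  shows "span (set cs) \<subseteq> coord_subspace k"
proof
  fix x assume x: "x \<in> span (set cs)"
  have cs: "set cs \<subseteq> carrier_vec n" using assms coord_subspace_carrier by auto
  have "x $ i = 0" if "k \<le> i" "i < n" for i
    using span_coord_eq_0[OF cs \<open>i < n\<close>] assms that x unfolding coord_subspace_def by auto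
  then show "x \<in> coord_subspace k" using span_closed[OF cs x] unfolding coord_subspace_def by auto
qed

lemma sum_signed_ind_coord_subspace:
  assumes "k < n"
  shows "(\<Sum>c\<in>coord_subspace (Suc k). signed_ind (c $ k + a)) = 0"
proof (rule sum_signed_ind_coord_eq_0[OF finite_coord_subspace coord_subspace_carrier])
  fix c y assume "c \<in> coord_subspace (Suc k)"
  then show "c + y \<cdot>\<^sub>v unit_vec n k \<in> coord_subspace (Suc k)"
    unfolding coord_subspace_def by auto
qed (use assms in simp_all)

lemma sum_signed_ind_span:
  assumes cs: "set cs \<subseteq> carrier_vec n" and "k < n"
  shows "(\<Sum>c\<in>span (set cs). signed_ind (c $ k + a)) =
    (if \<forall>v\<in>set cs. v $ k = 0 then CARD('a) ^ rank_list cs * signed_ind a else 0)"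
proof (cases "\<forall>v\<in>set cs. v $ k = 0")
  case True
  then have "\<forall>x\<in>span (set cs). x $ k = 0" using span_coord_eq_0[OF cs \<open>k < n\<close>] by blast
  then show ?thesis using True card_span[OF cs] by simp
next
  case False
  then obtain v where v: "v \<in> set cs" "v $ k \<noteq> 0" by blast
  let ?u = "inverse (v $ k) \<cdot>\<^sub>v v"
  have "?u \<in> span (set cs)" using smult_in_span[OF cs span_mem[OF cs v(1)]] .
  then have "(\<Sum>c\<in>span (set cs). signed_ind (c $ k + a)) = 0"
    using span_closed[OF cs] v cs \<open>k < n\<close> span_add1[OF cs _ smult_in_span[OF cs]]
    by (intro sum_signed_ind_coord_eq_0[OF finite_span[OF cs], where u = ?u]) auto
  then show ?thesis using False by auto
qed

text \<open>Adding a column \<open>c\<close> raises the rank iff \<open>c\<close> lies outside the span, so the sum over \<open>c\<close>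
  splits into the span and its complement; over the whole coordinate subspace the sum vanishes.\<close>

lemma sum_signed_ind_rank_Cons:
  assumes cs: "set cs \<subseteq> coord_subspace (Suc k)" and "k < n"
  shows "(\<Sum>c\<in>coord_subspace (Suc k). if rank_list (c # cs) = t then signed_ind (c $ k + a) else 0)
    = (of_bool (rank_list cs = t) - of_bool (rank_list cs + 1 = t)) *
      (if \<forall>v\<in>set cs. v $ k = 0 then CARD('a) ^ rank_list cs * signed_ind a else 0)"
proof -
  let ?V = "coord_subspace (Suc k)" and ?W = "span (set cs)"
  let ?g = "\<lambda>c. signed_ind (c $ k + a)"
  have csc: "set cs \<subseteq> carrier_vec n" using cs coord_subspace_carrier by auto
  have WV: "?W \<subseteq> ?V" using span_subset_coord_subspace[OF cs] .
  have rank: "rank_list (c # cs) = rank_list cs + of_bool (c \<notin> ?W)" if "c \<in> ?V" for c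
  proof -
    have "c \<in> carrier_vec n" using that coord_subspace_carrier by blast
    then show ?thesis using rank_list_Cons[OF _ csc] by simp
  qed
  have "(\<Sum>c\<in>?V. if rank_list (c # cs) = t then ?g c else 0)
      = (\<Sum>c\<in>?V - ?W. if rank_list (c # cs) = t then ?g c else 0)
        + (\<Sum>c\<in>?W. if rank_list (c # cs) = t then ?g c else 0)"
    by (rule sum.subset_diff[OF WV finite_coord_subspace])
  also have "(\<Sum>c\<in>?V - ?W. if rank_list (c # cs) = t then ?g c else 0)
      = (\<Sum>c\<in>?V - ?W. of_bool (rank_list cs + 1 = t) * ?g c)"
    by (rule sum.cong) (use rank in auto)
  also have "(\<Sum>c\<in>?W. if rank_list (c # cs) = t then ?g c else 0)
      = (\<Sum>c\<in>?W. of_bool (rank_list cs = t) * ?g c)"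
    by (rule sum.cong) (use rank WV in auto)
  also have "(\<Sum>c\<in>?V - ?W. of_bool (rank_list cs + 1 = t) * ?g c)
        + (\<Sum>c\<in>?W. of_bool (rank_list cs = t) * ?g c)
      = of_bool (rank_list cs + 1 = t) * (\<Sum>c\<in>?V - ?W. ?g c)
        + of_bool (rank_list cs = t) * (\<Sum>c\<in>?W. ?g c)"
    by (simp only: sum_distrib_left)
  also have "(\<Sum>c\<in>?V - ?W. ?g c) = (\<Sum>c\<in>?V. ?g c) - (\<Sum>c\<in>?W. ?g c)"
    by (rule sum_diff[OF finite_coord_subspace WV])
  finally show ?thesis
    unfolding sum_signed_ind_coord_subspace[OF \<open>k < n\<close>] sum_signed_ind_span[OF csc \<open>k < n\<close>]
    by (simp add: algebra_simps)
qed

lemma col_lists_Suc_coord_eq_0: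
  assumes "k < n"
  shows "{cs \<in> col_lists (Suc k) m. \<forall>v\<in>set cs. v $ k = 0} = col_lists k m"
proof -
  have "k \<le> i \<longleftrightarrow> i = k \<or> Suc k \<le> i" for i by auto
  then have "{v \<in> coord_subspace (Suc k). v $ k = 0} = coord_subspace k"
    using assms unfolding coord_subspace_def by auto
  then show ?thesis unfolding col_lists_def by blast
qed

lemma signed_count_Suc_Suc:
  assumes "k < n"
  shows "signed_count (Suc k) (Suc m) t = CARD('a) ^ t * signed_count k m t
           - (if 1 \<le> t then CARD('a) ^ (t - 1) * signed_count k m (t - 1) else 0)"
proof -
  let ?h = "\<lambda>cs. (of_bool (rank_list cs = t) - of_bool (rank_list cs + 1 = t)) *
                  (CARD('a) ^ rank_list cs * signed_ind (antitrace k cs))"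
  have "signed_count (Suc k) (Suc m) t = (\<Sum>cs\<in>col_lists (Suc k) m.
      \<Sum>c\<in>coord_subspace (Suc k).
        if rank_list (c # cs) = t then signed_ind (c $ k + antitrace k cs) else 0)"
    unfolding signed_count_Suc antitrace_Cons ..
  also have "\<dots> = (\<Sum>cs\<in>col_lists (Suc k) m. if \<forall>v\<in>set cs. v $ k = 0 then ?h cs else 0)"
    using sum_signed_ind_rank_Cons[OF _ assms] by (intro sum.cong) (auto simp: col_lists_def)
  also have "\<dots> = (\<Sum>cs\<in>col_lists k m. ?h cs)"
    by (simp add: sum.inter_filter[OF finite_col_lists, symmetric] col_lists_Suc_coord_eq_0[OF assms])
  also have "\<dots> = (\<Sum>cs\<in>col_lists k m.
      CARD('a) ^ t * (if rank_list cs = t then signed_ind (antitrace k cs) else 0)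
      - (if 1 \<le> t
         then CARD('a) ^ (t - 1) * (if rank_list cs = t - 1 then signed_ind (antitrace k cs) else 0)
         else 0))"
    by (intro sum.cong) auto
  finally show ?thesis
    unfolding signed_count_def by (simp add: sum_subtractf sum_distrib_left)
qed

lemma signed_count_eq:
  assumes "k \<le> m" and "k \<le> n"
  shows "signed_count k m t = (-1) ^ t * CARD('a) ^ (t choose 2) * qbinom CARD('a) k t"
  using assms
proof (induction k arbitrary: m t)
  case 0
  then show ?case using signed_count_0 by (cases t) (auto simp: binomial_eq_0)
next
  case (Suc k)
  obtain m' where m: "m = Suc m'" using Suc.prems by (cases m) auto
  have IH: "signed_count k m' t = (-1) ^ t * CARD('a) ^ (t choose 2) * qbinom CARD('a) k t" for t
    using Suc m by simp
  have "real CARD('a) > 1"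
    using card_mono[of "UNIV :: 'a set" "{0, 1}"] by simp
  moreover have "Suc t choose 2 = (t choose 2) + t" for t
    using binomial_Suc_Suc[of t 1] by (simp add: numeral_2_eq_2)
  ultimately show ?case
    unfolding m signed_count_Suc_Suc[OF Suc_le_lessD[OF Suc.prems(2)]] IH
    by (cases t) (simp_all add: qbinom_Suc_Suc algebra_simps power_add)
qed

definition antitrace_count :: "nat \<Rightarrow> nat \<Rightarrow> nat \<Rightarrow> 'a \<Rightarrow> nat" where
  "antitrace_count k m t a = card {cs \<in> col_lists k m. rank_list cs = t \<and> antitrace k cs = a}"

lemma signed_count_eq_diff:
  "signed_count k m t = real (antitrace_count k m t 0) - real (antitrace_count k m t 1)"
proof -
  have "signed_count k m t = (\<Sum>cs\<in>{cs\<in>col_lists k m. rank_list cs = t}. signed_ind (antitrace k cs))"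
    unfolding signed_count_def by (rule sum.inter_filter[OF finite_col_lists, symmetric])
  also have "\<dots> = real (antitrace_count k m t 0) - real (antitrace_count k m t 1)"
    unfolding antitrace_count_def using finite_col_lists
    by (simp add: sum_signed_ind conj_assoc)
  finally show ?thesis .
qed

lemma antitrace_map_smult:
  assumes cs: "cs \<in> col_lists k m" and "k \<le> m" "k \<le> n"
  shows "antitrace k (map (\<lambda>v. a \<cdot>\<^sub>v v) cs) = a * antitrace k cs"
proof -
  have "map (\<lambda>v. a \<cdot>\<^sub>v v) cs ! j $ (k - 1 - j) = a * (cs ! j $ (k - 1 - j))" if "j < k" for j
  proof -
    have "j < length cs" using cs that assms unfolding col_lists_def by auto
    moreover from this have "cs ! j \<in> carrier_vec n" using col_lists_carrier[OF cs] nth_mem by blast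
    ultimately show ?thesis using that assms by simp
  qed
  then show ?thesis unfolding antitrace_def by (simp add: sum_distrib_left)
qed

lemma antitrace_count_scale:
  assumes "a \<noteq> 0" and "k \<le> m" "k \<le> n"
  shows "antitrace_count k m t a = antitrace_count k m t 1"
proof -
  let ?A = "{cs \<in> col_lists k m. rank_list cs = t \<and> antitrace k cs = 1}"
  let ?B = "{cs \<in> col_lists k m. rank_list cs = t \<and> antitrace k cs = a}"
  have closed: "map (\<lambda>v. b \<cdot>\<^sub>v v) cs \<in> col_lists k m" if "cs \<in> col_lists k m" for b :: 'a and cs
    using that unfolding col_lists_def coord_subspace_def by auto
  have inverse: "map (\<lambda>v. inverse b \<cdot>\<^sub>v v) (map (\<lambda>v. b \<cdot>\<^sub>v v) cs) = cs"
    if "b \<noteq> 0" for b :: 'a and cs :: "'a vec list"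
  proof -
    have "inverse b \<cdot>\<^sub>v (b \<cdot>\<^sub>v v) = v" for v :: "'a vec"
      using that by (simp add: smult_smult_assoc)
    then show ?thesis by (induction cs) simp_all
  qed
  have "bij_betw (map (\<lambda>v. a \<cdot>\<^sub>v v)) ?A ?B"
  proof (rule bij_betw_byWitness[where f' = "map (\<lambda>v. inverse a \<cdot>\<^sub>v v)"])
    show "\<forall>cs\<in>?A. map (\<lambda>v. inverse a \<cdot>\<^sub>v v) (map (\<lambda>v. a \<cdot>\<^sub>v v) cs) = cs"
      "\<forall>cs\<in>?B. map (\<lambda>v. a \<cdot>\<^sub>v v) (map (\<lambda>v. inverse a \<cdot>\<^sub>v v) cs) = cs"
      using inverse[of a] inverse[of "inverse a"] \<open>a \<noteq> 0\<close> by auto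
    show "map (\<lambda>v. a \<cdot>\<^sub>v v) ` ?A \<subseteq> ?B" "map (\<lambda>v. inverse a \<cdot>\<^sub>v v) ` ?B \<subseteq> ?A"
      using closed antitrace_map_smult[OF _ assms(2,3)] \<open>a \<noteq> 0\<close>
        rank_list_map_smult[OF col_lists_carrier] by auto
  qed
  then show ?thesis unfolding antitrace_count_def by (simp add: bij_betw_same_card)
qed

lemma card_rank_antitrace_neq_0:
  assumes "k \<le> m" "k \<le> n"
  shows "card {cs \<in> col_lists k m. rank_list cs = t \<and> antitrace k cs \<noteq> 0}
      = (CARD('a) - 1) * antitrace_count k m t 1"
proof -
  have "card {cs \<in> col_lists k m. rank_list cs = t \<and> antitrace k cs \<in> UNIV - {0}}
      = (\<Sum>a\<in>UNIV - {0}. antitrace_count k m t a)"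
    unfolding antitrace_count_def by (rule card_eq_sum_card_fibers[OF finite_col_lists]) simp
  also have "\<dots> = (\<Sum>a\<in>UNIV - {0::'a}. antitrace_count k m t 1)"
    by (intro sum.cong refl antitrace_count_scale[OF _ assms]) simp
  also have "{cs \<in> col_lists k m. rank_list cs = t \<and> antitrace k cs \<in> UNIV - {0}}
      = {cs \<in> col_lists k m. rank_list cs = t \<and> antitrace k cs \<noteq> 0}"
    by blast
  finally show ?thesis by (simp add: card_Diff_singleton)
qed

lemma card_rank:
  assumes "k \<le> m" "k \<le> n"
  shows "card {cs \<in> col_lists k m. rank_list cs = t}
      = antitrace_count k m t 0 + (CARD('a) - 1) * antitrace_count k m t 1"
proof -
  have "{cs \<in> col_lists k m. rank_list cs = t}
      = {cs \<in> col_lists k m. rank_list cs = t \<and> antitrace k cs = 0}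
        \<union> {cs \<in> col_lists k m. rank_list cs = t \<and> antitrace k cs \<noteq> 0}"
    by blast
  also have "card \<dots> = antitrace_count k m t 0
      + card {cs \<in> col_lists k m. rank_list cs = t \<and> antitrace k cs \<noteq> 0}"
    unfolding antitrace_count_def by (rule card_Un_disjoint) (use finite_col_lists in auto)
  finally show ?thesis unfolding card_rank_antitrace_neq_0[OF assms] .
qed

lemma card_rank_antitrace_neq_0_eq:
  assumes "k \<le> m" "k \<le> n"
  defines "q \<equiv> real CARD('a)"
  shows "real (card {cs \<in> col_lists k m. rank_list cs = t \<and> antitrace k cs \<noteq> 0})
       = (q - 1) / q * (real (card {cs \<in> col_lists k m. rank_list cs = t})
                        - (-1) ^ t * q ^ (t choose 2) * qbinom q k t)"
proof -
  have "q > 0" and q_minus_1: "real (CARD('a) - 1) = q - 1"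
    unfolding q_def by (simp_all add: of_nat_diff Suc_leI)
  have "(-1) ^ t * q ^ (t choose 2) * qbinom q k t
      = real (antitrace_count k m t 0) - real (antitrace_count k m t 1)"
    using signed_count_eq[OF assms(1,2)] signed_count_eq_diff unfolding q_def by simp
  then have "real (card {cs \<in> col_lists k m. rank_list cs = t}) - (-1) ^ t * q ^ (t choose 2) * qbinom q k t
      = q * real (antitrace_count k m t 1)"
    unfolding card_rank[OF assms(1,2)] of_nat_add of_nat_mult q_minus_1 by (simp add: algebra_simps)
  then show ?thesis
    unfolding card_rank_antitrace_neq_0[OF assms(1,2)] of_nat_mult q_minus_1 using \<open>q > 0\<close> by simp
qed

end

definition twist :: "nat \<Rightarrow> 'a list \<Rightarrow> 'a list" where
  "twist l xs = rev (take l xs) @ drop l xs"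

lemma twist_twist: "l \<le> length xs \<Longrightarrow> twist l (twist l xs) = xs"
  unfolding twist_def by simp

lemma length_twist [simp]: "length (twist l xs) = length xs"
  unfolding twist_def by simp

lemma set_twist [simp]: "set (twist l xs) = set xs"
  unfolding twist_def by (metis append_take_drop_id set_append set_rev)

lemma nth_twist: "j < l \<Longrightarrow> l \<le> length xs \<Longrightarrow> twist l xs ! j = xs ! (l - Suc j)"
  unfolding twist_def by (simp add: nth_append rev_nth)

definition twisted_cols :: "nat \<Rightarrow> 'a mat \<Rightarrow> 'a vec list" where
  "twisted_cols l M = twist l (cols M)"

lemma coord_subspace_full: "finite_vec_space.coord_subspace l l = carrier_vec l"
  unfolding finite_vec_space.coord_subspace_def by auto

lemma bij_betw_twisted_cols:
  assumes "l \<le> m"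
  shows "bij_betw (twisted_cols l) (carrier_mat l m :: 'a::{finite,field} mat set)
    (finite_vec_space.col_lists l l m)"
proof (rule bij_betw_byWitness[where f' = "\<lambda>cs. mat_of_cols l (twist l cs)"])
  show "\<forall>M\<in>carrier_mat l m :: 'a mat set. mat_of_cols l (twist l (twisted_cols l M)) = M"
    unfolding twisted_cols_def using assms by (auto simp: twist_twist mat_of_cols_cols)
  show "\<forall>cs :: 'a vec list\<in>finite_vec_space.col_lists l l m.
      twisted_cols l (mat_of_cols l (twist l cs)) = cs"
    unfolding twisted_cols_def finite_vec_space.col_lists_def coord_subspace_full
    using assms by (auto simp: twist_twist)
  show "twisted_cols l ` (carrier_mat l m :: 'a mat set) \<subseteq> finite_vec_space.col_lists l l m"
    unfolding twisted_cols_def finite_vec_space.col_lists_def coord_subspace_full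
    by (auto dest!: subsetD[OF cols_dim])
  show "(\<lambda>cs. mat_of_cols l (twist l cs)) ` finite_vec_space.col_lists l l m
      \<subseteq> (carrier_mat l m :: 'a mat set)"
    unfolding finite_vec_space.col_lists_def by auto
qed

lemma mrank_eq_rank_list_twisted_cols:
  "M \<in> carrier_mat l m \<Longrightarrow> mrank M = vec_space.rank_list l (twisted_cols l M)"
  unfolding mrank_def vec_space.rank_def vec_space.rank_list_def twisted_cols_def by simp

lemma tau_eq_antitrace_twisted_cols:
  assumes M: "M \<in> carrier_mat l m" and "l \<le> m"
  shows "tau l M = finite_vec_space.antitrace l (twisted_cols l M)"
proof -
  have "twisted_cols l M ! j $ (l - 1 - j) = M $$ (l - Suc j, l - Suc j)" if "j < l" for j
    using M that \<open>l \<le> m\<close> by (simp add: twisted_cols_def nth_twist)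
  then have "finite_vec_space.antitrace l (twisted_cols l M) = (\<Sum>j<l. M $$ (l - Suc j, l - Suc j))"
    unfolding finite_vec_space.antitrace_def by simp
  also have "\<dots> = tau l M" unfolding tau_def by (rule sum.nat_diff_reindex)
  finally show ?thesis ..
qed

lemma card_mat_eq_card_col_lists:
  fixes P :: "nat \<Rightarrow> 'a::{finite,field} \<Rightarrow> bool"
  assumes "l \<le> m"
  shows "card {M. M \<in> carrier_mat l m \<and> P (mrank M) (tau l M)}
    = card {cs \<in> finite_vec_space.col_lists l l m.
              P (vec_space.rank_list l cs) (finite_vec_space.antitrace l cs)}"
proof -
  have "P (mrank M) (tau l M) \<longleftrightarrow>
      P (vec_space.rank_list l (twisted_cols l M)) (finite_vec_space.antitrace l (twisted_cols l M))"
    if "M \<in> carrier_mat l m" for M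
    using mrank_eq_rank_list_twisted_cols[OF that] tau_eq_antitrace_twisted_cols[OF that assms] by simp
  then have "{M. M \<in> carrier_mat l m \<and> P (mrank M) (tau l M)} = {M \<in> carrier_mat l m.
      P (vec_space.rank_list l (twisted_cols l M)) (finite_vec_space.antitrace l (twisted_cols l M))}"
    by blast
  then show ?thesis using card_filter_bij_betw[OF bij_betw_twisted_cols[OF assms]] by simp
qed

lemma first_rows_carrier_mat: "M \<in> carrier_mat l m \<Longrightarrow> first_rows l M = M"
  unfolding first_rows_def by (auto intro!: eq_matI)

lemma ws_all_rows: "ws TYPE('a::{finite,field}) s l t l m = (if s = t then w TYPE('a) l t l m else 0)"
proof -
  have iff: "(M \<in> carrier_mat l m \<and> mrank M = t \<and> tau l M \<noteq> 0 \<and> mrank (first_rows l M) = s)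
      \<longleftrightarrow> s = t \<and> (M \<in> carrier_mat l m \<and> mrank M = t \<and> tau l M \<noteq> 0)" for M :: "'a mat"
    using first_rows_carrier_mat[of M l m] by auto
  have eq: "{M :: 'a mat. M \<in> carrier_mat l m \<and> mrank M = t \<and> tau l M \<noteq> 0 \<and> mrank (first_rows l M) = s}
      = {M. s = t \<and> (M \<in> carrier_mat l m \<and> mrank M = t \<and> tau l M \<noteq> 0)}"
    by (rule Collect_cong) (rule iff)
  show ?thesis unfolding ws_def w_def eq by (cases "s = t") simp_all
qed

theorem mainTheorem15:
  fixes s t l m :: nat and q :: real
  assumes "q = real (card (UNIV :: ('a::{finite,field}) set))"
    and "1 \<le> t" and "t \<le> l" and "l \<le> m" and "1 \<le> s" and "s \<le> t"
  shows "(s \<noteq> t \<longrightarrow> ws TYPE('a) s l t l m = 0)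
       \<and> ws TYPE('a) t l t l m = w TYPE('a) l t l m
       \<and> real (w TYPE('a) l t l m)
           = (q - 1) / q * (real (mu TYPE('a) t l m) - (-1) ^ t * q ^ (t choose 2) * qbinom q l t)"
proof -
  interpret finite_vec_space "TYPE('a)" l .
  have w: "w TYPE('a) l t l m = card {cs \<in> col_lists l m. rank_list cs = t \<and> antitrace l cs \<noteq> 0}"
    unfolding w_def using card_mat_eq_card_col_lists[OF \<open>l \<le> m\<close>, of "\<lambda>r a. r = t \<and> a \<noteq> 0"] by simp
  have mu: "mu TYPE('a) t l m = card {cs \<in> col_lists l m. rank_list cs = t}"
    unfolding mu_def using card_mat_eq_card_col_lists[OF \<open>l \<le> m\<close>, of "\<lambda>r a. r = t"] by simp
  show ?thesis
  proof (intro conjI impI)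
    show "ws TYPE('a) s l t l m = 0" if "s \<noteq> t" using that by (simp add: ws_all_rows)
    show "ws TYPE('a) t l t l m = w TYPE('a) l t l m" by (simp add: ws_all_rows)
    show "real (w TYPE('a) l t l m)
        = (q - 1) / q * (real (mu TYPE('a) t l m) - (-1) ^ t * q ^ (t choose 2) * qbinom q l t)"
      unfolding w mu assms(1) by (rule card_rank_antitrace_neq_0_eq[OF \<open>l \<le> m\<close> order_refl])
  qed
qed

end
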